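(* For every real $x>1/4$, $$\sum_{k=0}^\infty\frac1{x^{2k}\binom{4k}{2k}}=\frac{16x^2}{16x^2-1}+2x\left(\frac{\operatorname{arccot}\sqrt{4x-1}}{(4x-1)\sqrt{4x-1}}-\frac{\operatorname{arccoth}\sqrt{4x+1}}{(4x+1)\sqrt{4x+1}}\right).$$
   Context: For $y>0$, $\operatorname{arccot}y=\arctan(1/y)$; for $y>1$, $\operatorname{arccoth}y=\operatorname{arctanh}(1/y)=\frac12\log\frac{y+1}{y-1}$. *)

theory Defs
  imports "HOL-Analysis.Analysis"
begin

definition arccot :: "real \<Rightarrow> real" where
  "arccot y = arctan (1 / y)"

definition arccoth :: "real \<Rightarrow> real" where
  "arccoth y = artanh (1 / y)"

end

theory Submission
  imports Defs
begin

text \<open>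
  By the Beta integral, 1 / binomial(4k, 2k) = (4k + 1) * integral of (1/4 - s^2)^(2k) over
  [-1/2, 1/2]. By monotone convergence the series is therefore the integral over [-1/2, 1/2] of
    sum_k (4k + 1) w^(2k) = 1/(1-w)^2 + 1/(1+w)^2 - 1/(2(1-w)) - 1/(2(1+w)),  w = (1/4 - s^2)/x.
  Since x(1-w) = s^2 + a^2 and x(1+w) = b^2 - s^2 with a = sqrt(4x-1)/2 and b = sqrt(4x+1)/2,
  this is a sum of rational functions of s whose antiderivatives involve arctan(s/a) and
  artanh(s/b); at s = 1/2 these become arccot(2a) and arccoth(2b).
\<close>

lemma Beta_of_nat_succ_succ: "Beta (real n + 1) (real n + 1) = fact n ^ 2 / fact (2 * n + 1)"
proof -
  have "Beta (real n + 1) (real n + 1) =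
      Gamma (1 + real n) * Gamma (1 + real n) / Gamma (1 + real (2 * n + 1))"
    unfolding Beta_def by (simp add: add_ac)
  also have "\<dots> = fact n ^ 2 / fact (2 * n + 1)"
    by (simp only: Gamma_fact power2_eq_square)
  finally show ?thesis .
qed

lemma has_integral_power_t_one_minus_t:
  "((\<lambda>t::real. (t * (1 - t)) ^ n) has_integral fact n ^ 2 / fact (2 * n + 1)) {0..1}"
proof -
  have "((\<lambda>t. t powr (real n + 1 - 1) * (1 - t) powr (real n + 1 - 1)) has_integral
      Beta (real n + 1) (real n + 1)) {0..1}"
    by (rule has_integral_Beta_real) simp_all
  then have beta: "((\<lambda>t. t powr real n * (1 - t) powr real n) has_integral
      fact n ^ 2 / fact (2 * n + 1)) {0..1}"
    by (simp only: add_diff_cancel_right' Beta_of_nat_succ_succ)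
  show ?thesis
    by (rule has_integral_spike_finite[of "{0, 1}", OF _ _ beta])
      (auto simp: powr_realpow power_mult_distrib)
qed

lemma inverse_central_binomial_eq:
  "1 / real ((2 * n) choose n) = real (2 * n + 1) * (fact n ^ 2 / fact (2 * n + 1))"
proof -
  have binom: "real ((2 * n) choose n) = fact (2 * n) / (fact n * fact n)"
    by (subst binomial_fact) (auto simp: mult_2)
  have fact_Suc: "(fact (2 * n + 1) :: real) = real (2 * n + 1) * fact (2 * n)"
    by simp
  have field_eq: "1 / (A / (B * B)) = N * (B\<^sup>2 / (N * A))"
    if "A \<noteq> 0" "N \<noteq> 0" for A B N :: real
    using that by (simp add: field_simps power2_eq_square)
  show ?thesis
    unfolding binom fact_Suc by (rule field_eq) simp_all
qed

lemma has_integral_inverse_central_binomial: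
  "((\<lambda>s::real. real (2 * n + 1) * (1/4 - s\<^sup>2) ^ n)
     has_integral 1 / real ((2 * n) choose n)) {-1/2..1/2}"
proof -
  have "((\<lambda>t::real. real (2 * n + 1) * (t * (1 - t)) ^ n)
      has_integral real (2 * n + 1) * (fact n ^ 2 / fact (2 * n + 1))) {0..1}"
    by (intro has_integral_mult_right has_integral_power_t_one_minus_t)
  from has_integral_shift_real_ivl[OF this, of "1/2"]
  have "((\<lambda>s::real. real (2 * n + 1) * ((s + 1/2) * (1 - (s + 1/2))) ^ n)
      has_integral real (2 * n + 1) * (fact n ^ 2 / fact (2 * n + 1))) {0 - 1/2..1 - 1/2}" .
  moreover have "(s + 1/2) * (1 - (s + 1/2)) = 1/4 - s\<^sup>2" for s :: real
    by (simp add: power2_eq_square algebra_simps)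
  moreover have "(0::real) - 1/2 = -1/2" "(1::real) - 1/2 = 1/2"
    by simp_all
  ultimately show ?thesis
    by (simp only: inverse_central_binomial_eq)
qed

lemma has_integral_scaled_inverse_central_binomial:
  fixes x :: real
  shows "((\<lambda>s. real (4 * k + 1) * ((1/4 - s\<^sup>2) / x) ^ (2 * k)) has_integral
    1 / (x ^ (2 * k) * real ((4 * k) choose (2 * k)))) {-1/2..1/2}"
proof -
  have "2 * (2 * k) = 4 * k"
    by simp
  from has_integral_inverse_central_binomial[of "2 * k", unfolded this]
  have "((\<lambda>s. 1 / x ^ (2 * k) * (real (4 * k + 1) * (1/4 - s\<^sup>2) ^ (2 * k))) has_integral
      1 / x ^ (2 * k) * (1 / real ((4 * k) choose (2 * k)))) {-1/2..1/2}"
    by (rule has_integral_mult_right)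
  moreover have "1 / x ^ (2 * k) * (real (4 * k + 1) * (1/4 - s\<^sup>2) ^ (2 * k)) =
      real (4 * k + 1) * ((1/4 - s\<^sup>2) / x) ^ (2 * k)" for s
    by (simp add: power_divide)
  moreover have "1 / x ^ (2 * k) * (1 / real ((4 * k) choose (2 * k))) =
      1 / (x ^ (2 * k) * real ((4 * k) choose (2 * k)))"
    by simp
  ultimately show ?thesis
    by (simp only:)
qed

definition sum_4k_plus_1_even_powers :: "real \<Rightarrow> real" where
  "sum_4k_plus_1_even_powers w =
    (1 / (1 - w)\<^sup>2 - 1 / (2 * (1 - w))) + (1 / (1 + w)\<^sup>2 - 1 / (2 * (1 + w)))"

lemma sums_sum_4k_plus_1_even_powers:
  fixes w :: real
  assumes "\<bar>w\<bar> < 1"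
  shows "(\<lambda>k. real (4 * k + 1) * w ^ (2 * k)) sums sum_4k_plus_1_even_powers w"
proof -
  have v: "norm (w\<^sup>2) < 1"
    using assms by (simp add: abs_square_less_1)
  have "(\<lambda>k. 4 * (of_nat (Suc k) * (w\<^sup>2) ^ k) - 3 * (w\<^sup>2) ^ k) sums
      (4 * (1 / (1 - w\<^sup>2)\<^sup>2) - 3 * (1 / (1 - w\<^sup>2)))"
    by (intro sums_diff sums_mult geometric_deriv_sums geometric_sums v)
  moreover have "sum_4k_plus_1_even_powers w = 4 * (1 / (1 - w\<^sup>2)\<^sup>2) - 3 * (1 / (1 - w\<^sup>2))"
  proof -
    have nz: "1 - w \<noteq> 0" "1 + w \<noteq> 0" "1 - w\<^sup>2 \<noteq> 0"
      using assms v by auto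
    have "sum_4k_plus_1_even_powers w =
        (1 / (1 - w)\<^sup>2 + 1 / (1 + w)\<^sup>2) - (1 / (2 * (1 - w)) + 1 / (2 * (1 + w)))"
      unfolding sum_4k_plus_1_even_powers_def by linarith
    also have "1 / (1 - w)\<^sup>2 + 1 / (1 + w)\<^sup>2 = 2 * (1 + w\<^sup>2) / (1 - w\<^sup>2)\<^sup>2"
      using nz by (simp add: field_simps) (simp add: power2_eq_square algebra_simps)
    also have "1 / (2 * (1 - w)) + 1 / (2 * (1 + w)) = 1 / (1 - w\<^sup>2)"
      using nz by (simp add: field_simps) (simp add: power2_eq_square algebra_simps)
    also have "2 * (1 + w\<^sup>2) / (1 - w\<^sup>2)\<^sup>2 - 1 / (1 - w\<^sup>2) =
        4 * (1 / (1 - w\<^sup>2)\<^sup>2) - 3 * (1 / (1 - w\<^sup>2))"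
      using nz by (simp add: field_simps; algebra)
    finally show ?thesis .
  qed
  moreover have "4 * (of_nat (Suc k) * (w\<^sup>2) ^ k) - 3 * (w\<^sup>2) ^ k =
      real (4 * k + 1) * w ^ (2 * k)" for k
    by (simp add: power_mult[symmetric] algebra_simps)
  ultimately show ?thesis
    by (simp only:)
qed

lemma sum_4k_plus_1_even_powers_partial_fractions:
  fixes x s :: real
  assumes "x \<noteq> 0"
  shows "sum_4k_plus_1_even_powers ((1/4 - s\<^sup>2) / x) =
    (x\<^sup>2 / (s\<^sup>2 + (x - 1/4))\<^sup>2 - x / (2 * (s\<^sup>2 + (x - 1/4))))
      + (x\<^sup>2 / ((x + 1/4) - s\<^sup>2)\<^sup>2 - x / (2 * ((x + 1/4) - s\<^sup>2)))"
proof -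
  have "1 - (1/4 - s\<^sup>2) / x = (s\<^sup>2 + (x - 1/4)) / x"
    and "1 + (1/4 - s\<^sup>2) / x = ((x + 1/4) - s\<^sup>2) / x"
    using assms by (simp_all add: diff_divide_distrib add_divide_distrib)
  then show ?thesis
    unfolding sum_4k_plus_1_even_powers_def by (simp add: power_divide)
qed

lemma abs_quarter_minus_square_div_less_one:
  fixes x s :: real
  assumes "x > 1/4" "s \<in> {-1/2..1/2}"
  shows "\<bar>(1/4 - s\<^sup>2) / x\<bar> < 1"
proof -
  have "0 \<le> (1/2 - s) * (1/2 + s)"
    using assms(2) by (intro mult_nonneg_nonneg) auto
  then have "0 \<le> 1/4 - s\<^sup>2"
    by (simp add: power2_eq_square algebra_simps)
  moreover have "1/4 - s\<^sup>2 < x"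
    using assms(1) zero_le_power2[of s] by linarith
  ultimately show ?thesis
    using assms(1) by simp
qed

lemma sums_has_integral_nonneg:
  fixes f :: "nat \<Rightarrow> 'a::euclidean_space \<Rightarrow> real"
  assumes f_int: "\<And>k. (f k has_integral c k) S"
    and f_nonneg: "\<And>k x. x \<in> S \<Longrightarrow> 0 \<le> f k x"
    and f_sums: "\<And>x. x \<in> S \<Longrightarrow> (\<lambda>k. f k x) sums g x"
    and g_int: "(g has_integral I) S"
  shows "c sums I"
proof -
  define F where "F n x = (\<Sum>k<n. f k x)" for n x
  have F_int: "(F n has_integral (\<Sum>k<n. c k)) S" for n
    unfolding F_def by (intro has_integral_sum f_int) auto
  have F_le: "F n x \<le> g x" if "x \<in> S" for n x
    unfolding F_def using f_sums[OF that] f_nonneg[OF that]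
    by (metis sums_iff sum_le_suminf finite_lessThan)
  have "bounded (range (\<lambda>n. integral S (F n)))"
    unfolding bounded_real
  proof (intro exI ballI)
    fix y assume "y \<in> range (\<lambda>n. integral S (F n))"
    then obtain n where y: "y = (\<Sum>k<n. c k)"
      using F_int integral_unique by blast
    have "0 \<le> y"
      using has_integral_nonneg[OF F_int] f_nonneg unfolding y F_def by (simp add: sum_nonneg)
    moreover have "y \<le> I"
      using has_integral_le[OF F_int g_int] F_le unfolding y by blast
    ultimately show "\<bar>y\<bar> \<le> I" by simp
  qed
  then have "(\<lambda>n. integral S (F n)) \<longlonglongrightarrow> integral S g"
    using monotone_convergence_increasing[of F S g] F_int f_nonneg f_sums
    by (auto simp: F_def sums_def)
  then show ?thesis
    using F_int[THEN integral_unique] g_int[THEN integral_unique] by (simp add: sums_def)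
qed

lemma has_integral_odd_antiderivative:
  fixes G g :: "real \<Rightarrow> real"
  assumes "0 \<le> r"
    and "\<And>s. s \<in> {-r..r} \<Longrightarrow> (G has_real_derivative g s) (at s)"
    and "G (- r) = - G r"
  shows "(g has_integral 2 * G r) {-r..r}"
proof -
  have "(g has_integral G r - G (- r)) {-r..r}"
    using assms by (intro fundamental_theorem_of_calculus)
      (auto simp: has_real_derivative_iff_has_vector_derivative[symmetric]
        intro: has_field_derivative_at_within)
  then show ?thesis
    using assms(3) by simp
qed

lemma DERIV_arctan_scaled:
  fixes a s :: real
  assumes "0 < a"
  shows "((\<lambda>s. arctan (s / a) / a) has_real_derivative 1 / (s\<^sup>2 + a\<^sup>2)) (at s)"
proof -
  have "((\<lambda>s. arctan (s / a) / a) has_real_derivative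
      inverse (1 + (s / a)\<^sup>2) * (1 / a) / a) (at s)"
    by (intro DERIV_cdivide DERIV_chain2[OF DERIV_arctan]
        DERIV_cdivide[OF DERIV_ident, of _ a] DERIV_ident)
  moreover have "1 + (s / a)\<^sup>2 = (s\<^sup>2 + a\<^sup>2) / a\<^sup>2"
    using assms by (simp add: field_simps)
  ultimately show ?thesis
    using assms by (simp add: power2_eq_square)
qed

lemma DERIV_div_sum_squares:
  fixes a s :: real
  assumes "0 < a"
  shows "((\<lambda>s. s / (s\<^sup>2 + a\<^sup>2)) has_real_derivative
    2 * a\<^sup>2 / (s\<^sup>2 + a\<^sup>2)\<^sup>2 - 1 / (s\<^sup>2 + a\<^sup>2)) (at s)"
proof -
  have "s\<^sup>2 + a\<^sup>2 \<noteq> 0"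
    using assms by (simp add: add_nonneg_pos)
  then show ?thesis
    by (auto intro!: derivative_eq_intros simp: divide_simps; algebra)
qed

lemma DERIV_artanh_scaled:
  fixes b s :: real
  assumes "\<bar>s\<bar> < b"
  shows "((\<lambda>s. artanh (s / b) / b) has_real_derivative 1 / (b\<^sup>2 - s\<^sup>2)) (at s)"
proof -
  have "\<bar>s / b\<bar> < 1" "b \<noteq> 0"
    using assms by auto
  then have "((\<lambda>s. artanh (s / b) / b) has_real_derivative
      1 / (1 - (s / b)\<^sup>2) * (1 / b) / b) (at s)"
    by (intro DERIV_cdivide DERIV_chain2[OF artanh_real_has_field_derivative]
        DERIV_cdivide[OF DERIV_ident, of _ b] DERIV_ident)
  moreover have "1 - (s / b)\<^sup>2 = (b\<^sup>2 - s\<^sup>2) / b\<^sup>2"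
    using \<open>b \<noteq> 0\<close> by (simp add: field_simps)
  ultimately show ?thesis
    using \<open>b \<noteq> 0\<close> by (simp add: power2_eq_square)
qed

lemma DERIV_div_diff_squares:
  fixes b s :: real
  assumes "\<bar>s\<bar> < b"
  shows "((\<lambda>s. s / (b\<^sup>2 - s\<^sup>2)) has_real_derivative
    2 * b\<^sup>2 / (b\<^sup>2 - s\<^sup>2)\<^sup>2 - 1 / (b\<^sup>2 - s\<^sup>2)) (at s)"
proof -
  have "b\<^sup>2 - s\<^sup>2 \<noteq> 0"
    using assms abs_le_square_iff[of b s] by auto
  then show ?thesis
    by (auto intro!: derivative_eq_intros simp: divide_simps; algebra)
qed

lemma has_integral_inverse_sum_squares:
  fixes a r :: real
  assumes "0 < a" "0 \<le> r"
  shows "((\<lambda>s. 1 / (s\<^sup>2 + a\<^sup>2)) has_integral 2 * (arctan (r / a) / a)) {-r..r}"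
  using assms by (intro has_integral_odd_antiderivative DERIV_arctan_scaled)
    (auto simp: arctan_minus)

lemma has_integral_inverse_sum_squares_squared:
  fixes a r :: real
  assumes "0 < a" "0 \<le> r"
  shows "((\<lambda>s. 1 / (s\<^sup>2 + a\<^sup>2)\<^sup>2) has_integral
    2 * ((r / (r\<^sup>2 + a\<^sup>2) + arctan (r / a) / a) / (2 * a\<^sup>2))) {-r..r}"
proof (rule has_integral_odd_antiderivative[OF \<open>0 \<le> r\<close>])
  fix s :: real
  have "((\<lambda>s. (s / (s\<^sup>2 + a\<^sup>2) + arctan (s / a) / a) / (2 * a\<^sup>2)) has_real_derivative
      (2 * a\<^sup>2 / (s\<^sup>2 + a\<^sup>2)\<^sup>2 - 1 / (s\<^sup>2 + a\<^sup>2) + 1 / (s\<^sup>2 + a\<^sup>2)) / (2 * a\<^sup>2)) (at s)"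
    using assms by (intro DERIV_cdivide DERIV_add DERIV_div_sum_squares DERIV_arctan_scaled)
  then show "((\<lambda>s. (s / (s\<^sup>2 + a\<^sup>2) + arctan (s / a) / a) / (2 * a\<^sup>2))
      has_real_derivative 1 / (s\<^sup>2 + a\<^sup>2)\<^sup>2) (at s)"
    using assms by simp
qed (simp add: arctan_minus add_divide_distrib diff_divide_distrib)

lemma has_integral_inverse_diff_squares:
  fixes b r :: real
  assumes "0 \<le> r" "r < b"
  shows "((\<lambda>s. 1 / (b\<^sup>2 - s\<^sup>2)) has_integral 2 * (artanh (r / b) / b)) {-r..r}"
  using assms by (intro has_integral_odd_antiderivative DERIV_artanh_scaled) auto

lemma has_integral_inverse_diff_squares_squared:
  fixes b r :: real
  assumes "0 \<le> r" "r < b"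
  shows "((\<lambda>s. 1 / (b\<^sup>2 - s\<^sup>2)\<^sup>2) has_integral
    2 * ((r / (b\<^sup>2 - r\<^sup>2) + artanh (r / b) / b) / (2 * b\<^sup>2))) {-r..r}"
proof (rule has_integral_odd_antiderivative[OF \<open>0 \<le> r\<close>])
  fix s :: real
  assume "s \<in> {-r..r}"
  then have "\<bar>s\<bar> < b"
    using assms by auto
  then have "((\<lambda>s. (s / (b\<^sup>2 - s\<^sup>2) + artanh (s / b) / b) / (2 * b\<^sup>2)) has_real_derivative
      (2 * b\<^sup>2 / (b\<^sup>2 - s\<^sup>2)\<^sup>2 - 1 / (b\<^sup>2 - s\<^sup>2) + 1 / (b\<^sup>2 - s\<^sup>2)) / (2 * b\<^sup>2)) (at s)"
    by (intro DERIV_cdivide DERIV_add DERIV_div_diff_squares DERIV_artanh_scaled)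
  then show "((\<lambda>s. (s / (b\<^sup>2 - s\<^sup>2) + artanh (s / b) / b) / (2 * b\<^sup>2))
      has_real_derivative 1 / (b\<^sup>2 - s\<^sup>2)\<^sup>2) (at s)"
    using assms by simp
qed (use assms in \<open>simp add: add_divide_distrib diff_divide_distrib\<close>)

lemma has_integral_arctan_part:
  fixes x :: real
  assumes "x > 1/4"
  shows "((\<lambda>s. x\<^sup>2 / (s\<^sup>2 + (x - 1/4))\<^sup>2 - x / (2 * (s\<^sup>2 + (x - 1/4)))) has_integral
    2 * x / (4*x - 1) + 2 * x * arccot (sqrt (4*x - 1)) / ((4*x - 1) * sqrt (4*x - 1))) {-1/2..1/2}"
proof -
  define p where "p = sqrt (4*x - 1)"
  have p: "0 < p" "p\<^sup>2 = 4*x - 1"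
    using assms by (simp_all add: p_def)
  have "x - 1/4 = (p/2)\<^sup>2" "(1/2)\<^sup>2 + (p/2)\<^sup>2 = x" "1/2 / (p/2) = 1/p"
    using p by (simp_all add: power_divide field_simps)
  then have "((\<lambda>s. x\<^sup>2 * (1 / (s\<^sup>2 + (x - 1/4))\<^sup>2) - x / 2 * (1 / (s\<^sup>2 + (x - 1/4))))
      has_integral x\<^sup>2 * (2 * ((1/2 / x + arccot p / (p/2)) / (2 * (p/2)\<^sup>2)))
        - x / 2 * (2 * (arccot p / (p/2))))
      {-1/2..1/2}"
    using has_integral_inverse_sum_squares_squared[of "p/2" "1/2"]
      has_integral_inverse_sum_squares[of "p/2" "1/2"] p(1)
    by (intro has_integral_diff has_integral_mult_right) (simp_all add: arccot_def)
  moreover have "x\<^sup>2 * (2 * ((1/2 / x + arccot p / (p/2)) / (2 * (p/2)\<^sup>2)))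
      - x / 2 * (2 * (arccot p / (p/2))) = 2 * x / p\<^sup>2 + 2 * x * arccot p / (p\<^sup>2 * p)"
    using assms p(1) by (simp add: field_simps) (use p(2) in algebra)
  ultimately show ?thesis
    unfolding p_def[symmetric] p(2) by simp
qed

lemma has_integral_artanh_part:
  fixes x :: real
  assumes "x > 1/4"
  shows "((\<lambda>s. x\<^sup>2 / ((x + 1/4) - s\<^sup>2)\<^sup>2 - x / (2 * ((x + 1/4) - s\<^sup>2))) has_integral
    2 * x / (4*x + 1) - 2 * x * arccoth (sqrt (4*x + 1)) / ((4*x + 1) * sqrt (4*x + 1))) {-1/2..1/2}"
proof -
  define q where "q = sqrt (4*x + 1)"
  have q: "1 < q" "q\<^sup>2 = 4*x + 1"
    using assms by (simp_all add: q_def)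
  have "x + 1/4 = (q/2)\<^sup>2" "(q/2)\<^sup>2 - (1/2)\<^sup>2 = x" "1/2 / (q/2) = 1/q"
    using q by (simp_all add: power_divide field_simps)
  then have "((\<lambda>s. x\<^sup>2 * (1 / ((x + 1/4) - s\<^sup>2)\<^sup>2) - x / 2 * (1 / ((x + 1/4) - s\<^sup>2)))
      has_integral x\<^sup>2 * (2 * ((1/2 / x + arccoth q / (q/2)) / (2 * (q/2)\<^sup>2)))
        - x / 2 * (2 * (arccoth q / (q/2))))
      {-1/2..1/2}"
    using has_integral_inverse_diff_squares_squared[of "1/2" "q/2"]
      has_integral_inverse_diff_squares[of "1/2" "q/2"] q(1)
    by (intro has_integral_diff has_integral_mult_right) (simp_all add: arccoth_def)
  moreover have "x\<^sup>2 * (2 * ((1/2 / x + arccoth q / (q/2)) / (2 * (q/2)\<^sup>2)))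
      - x / 2 * (2 * (arccoth q / (q/2))) = 2 * x / q\<^sup>2 - 2 * x * arccoth q / (q\<^sup>2 * q)"
    using assms q(1) by (simp add: field_simps) (use q(2) in algebra)
  ultimately show ?thesis
    unfolding q_def[symmetric] q(2) by simp
qed

lemma has_integral_sum_4k_plus_1_even_powers:
  fixes x :: real
  assumes "x > 1/4"
  shows "((\<lambda>s. sum_4k_plus_1_even_powers ((1/4 - s\<^sup>2) / x)) has_integral
    16 * x^2 / (16 * x^2 - 1)
     + 2 * x * (arccot (sqrt (4*x - 1)) / ((4*x - 1) * sqrt (4*x - 1))
              - arccoth (sqrt (4*x + 1)) / ((4*x + 1) * sqrt (4*x + 1)))) {-1/2..1/2}"
proof -
  have "x \<noteq> 0"
    using assms by simp
  have rational_part: "2 * x / (4*x - 1) + 2 * x / (4*x + 1) = 16 * x^2 / (16 * x^2 - 1)"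
  proof -
    have "16 * x^2 - 1 = (4*x - 1) * (4*x + 1)"
      by algebra
    moreover have "4*x - 1 \<noteq> 0" "4*x + 1 \<noteq> 0"
      using assms by auto
    ultimately show ?thesis
      by (simp add: field_simps)
  qed
  have "((\<lambda>s. sum_4k_plus_1_even_powers ((1/4 - s\<^sup>2) / x)) has_integral
      (2 * x / (4*x - 1) + 2 * x * arccot (sqrt (4*x - 1)) / ((4*x - 1) * sqrt (4*x - 1)))
      + (2 * x / (4*x + 1) - 2 * x * arccoth (sqrt (4*x + 1)) / ((4*x + 1) * sqrt (4*x + 1))))
      {-1/2..1/2}"
    unfolding sum_4k_plus_1_even_powers_partial_fractions[OF \<open>x \<noteq> 0\<close>]
    by (rule has_integral_add[OF has_integral_arctan_part[OF assms]
          has_integral_artanh_part[OF assms]])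
  also have "(2 * x / (4*x - 1) + 2 * x * arccot (sqrt (4*x - 1)) / ((4*x - 1) * sqrt (4*x - 1)))
      + (2 * x / (4*x + 1) - 2 * x * arccoth (sqrt (4*x + 1)) / ((4*x + 1) * sqrt (4*x + 1))) =
    (2 * x / (4*x - 1) + 2 * x / (4*x + 1))
     + 2 * x * (arccot (sqrt (4*x - 1)) / ((4*x - 1) * sqrt (4*x - 1))
              - arccoth (sqrt (4*x + 1)) / ((4*x + 1) * sqrt (4*x + 1)))"
    by (simp add: algebra_simps)
  finally show ?thesis
    unfolding rational_part .
qed

theorem lemma4p1:
  fixes x :: real
  assumes "x > 1/4"
  shows "(\<lambda>k::nat. 1 / (x ^ (2*k) * real ((4*k) choose (2*k)))) sums
    (16 * x^2 / (16 * x^2 - 1)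
     + 2 * x * (arccot (sqrt (4*x - 1)) / ((4*x - 1) * sqrt (4*x - 1))
              - arccoth (sqrt (4*x + 1)) / ((4*x + 1) * sqrt (4*x + 1))))"
proof -
  let ?f = "\<lambda>k s. real (4 * k + 1) * ((1/4 - s\<^sup>2) / x) ^ (2 * k)"
  have "(?f k has_integral 1 / (x ^ (2*k) * real ((4*k) choose (2*k)))) {-1/2..1/2}" for k
    by (rule has_integral_scaled_inverse_central_binomial)
  moreover have "0 \<le> ?f k s" for k s
    by simp
  moreover have "(\<lambda>k. ?f k s) sums sum_4k_plus_1_even_powers ((1/4 - s\<^sup>2) / x)"
    if "s \<in> {-1/2..1/2}" for s
    using abs_quarter_minus_square_div_less_one[OF assms that]
    by (rule sums_sum_4k_plus_1_even_powers)
  ultimately show ?thesis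
    using has_integral_sum_4k_plus_1_even_powers[OF assms] by (rule sums_has_integral_nonneg)
qed

end
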